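(* Let $\mathcal{X}$ be a measurable space, let $(X,Y)$ be a random pair with $X\in\mathcal{X}$, $Y\in\mathbb{R}$, and let $D=(X_i,Y_i)_{i=1}^N$ be an i.i.d. sample distributed as $(X,Y)$. Let $F$ be a convex class of functions $\mathcal{X}\to\mathbb{R}$ (with $\mathbb{E}f^2(X)<\infty$ for $f\in F$, $\mathbb{E}Y^2<\infty$), and let $f^*\in F$ satisfy $f^*=\operatorname{argmin}_{f\in F}\mathbb{E}(f(X)-Y)^2$. Let $n$ divide $N$, $m=N/n$, and let $I_1,\dots,I_n$ be the natural decomposition of $\{1,\dots,N\}$ into consecutive blocks of cardinality $m$. For $f,h\in F$ and $1\le j\le n$ set $$\mathbb{Q}_{f,h}(j)=\frac1m\sum_{i\in I_j}(f-h)^2(X_i),\qquad \mathbb{M}_{f,h}(j)=\frac2m\sum_{i\in I_j}(f-h)(X_i)\,(h(X_i)-Y_i),$$ $$\mathbb{B}_{f,h}(j)=\frac1m\sum_{i\in I_j}(f(X_i)-Y_i)^2-\frac1m\sum_{i\in I_j}(h(X_i)-Y_i)^2=\mathbb{Q}_{f,h}(j)+\mathbb{M}_{f,h}(j).$$ Let $\widetilde f\in F$ be a minimizer over $F$ of $\phi(f)=\max_{g\in F}\mathrm{Med}(\mathbb{B}_{f,g})$, where $\mathrm{Med}(\mathbb{B}_{f,g})$ is a median of the vector $(\mathbb{B}_{f,g}(j))_{j=1}^n$. Let $r>0$ and $\gamma_1,\gamma_2>0$, and suppose the sample $D$ satisfies: (1) for every $f\in F$ with $\|f-f^*\|_{L_2}\ge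 r$, one has $\mathbb{B}_{f,f^*}(j)\ge\gamma_1\|f-f^*\|_{L_2}^2$ for at least $0.99n$ of the blocks $j$; (2) for every $f\in F$ with $\|f-f^*\|_{L_2}<r$, one has $|\mathbb{M}_{f,f^*}(j)-\mathbb{E}\mathbb{M}_{f,f^*}(j)|\le\gamma_2r^2$ for at least $0.99n$ of the blocks $j$. If $\gamma_1>\gamma_2$, then $$\mathbb{E}\big((\widetilde f(X)-Y)^2\,\big|\,D\big)\le\mathbb{E}(f^*(X)-Y)^2+(1+2\gamma_2)r^2.$$
   Context: $\|f\|_{L_2}=(\mathbb{E}f^2(X))^{1/2}$ with respect to the distribution of $X$. For a fixed (non-random) function $f$, $\mathbb{E}\mathbb{M}_{f,f^*}(j)=2\mathbb{E}\big[(f-f^* )(X)(f^*(X)-Y)\big]$; for the data-dependent $\widetilde f$, $\mathbb{E}(\cdot\mid D)$ denotes expectation over an independent copy $(X,Y)$ with $D$ fixed. *)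

theory Defs
  imports "HOL-Probability.Probability"
begin

definition block :: "nat \<Rightarrow> nat \<Rightarrow> nat \<Rightarrow> nat set" where
  "block N n j = {(j - 1) * (N div n) + 1 .. j * (N div n)}"

definition Qb :: "nat \<Rightarrow> nat \<Rightarrow> (nat \<Rightarrow> 'a) \<Rightarrow> (nat \<Rightarrow> real)
    \<Rightarrow> ('a \<Rightarrow> real) \<Rightarrow> ('a \<Rightarrow> real) \<Rightarrow> nat \<Rightarrow> real" where
  "Qb N n xs ys f h j = (1 / real (N div n)) * (\<Sum>i\<in>block N n j. (f (xs i) - h (xs i))^2)"

definition Mb :: "nat \<Rightarrow> nat \<Rightarrow> (nat \<Rightarrow> 'a) \<Rightarrow> (nat \<Rightarrow> real)
    \<Rightarrow> ('a \<Rightarrow> real) \<Rightarrow> ('a \<Rightarrow> real) \<Rightarrow> nat \<Rightarrow> real" where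
  "Mb N n xs ys f h j = (2 / real (N div n)) *
     (\<Sum>i\<in>block N n j. (f (xs i) - h (xs i)) * (h (xs i) - ys i))"

definition Bb :: "nat \<Rightarrow> nat \<Rightarrow> (nat \<Rightarrow> 'a) \<Rightarrow> (nat \<Rightarrow> real)
    \<Rightarrow> ('a \<Rightarrow> real) \<Rightarrow> ('a \<Rightarrow> real) \<Rightarrow> nat \<Rightarrow> real" where
  "Bb N n xs ys f h j = (1 / real (N div n)) * (\<Sum>i\<in>block N n j. (f (xs i) - ys i)^2)
     - (1 / real (N div n)) * (\<Sum>i\<in>block N n j. (h (xs i) - ys i)^2)"

definition is_median :: "nat \<Rightarrow> (nat \<Rightarrow> real) \<Rightarrow> real \<Rightarrow> bool" where
  "is_median n v t \<longleftrightarrow> 2 * card {j \<in> {1..n}. v j \<le> t} \<ge> n \<and> 2 * card {j \<in> {1..n}. t \<le> v j} \<ge> n"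

text \<open>L2 norm of f(X) w.r.t. the joint law P of (X,Y).\<close>
definition L2n :: "('a \<times> real) measure \<Rightarrow> ('a \<Rightarrow> real) \<Rightarrow> real" where
  "L2n P f = sqrt (\<integral>z. (f (fst z))^2 \<partial>P)"

text \<open>Expected value of M_{f,h}(j) for fixed f,h: 2 E[(f-h)(X)(h(X)-Y)].\<close>
definition EMb :: "('a \<times> real) measure \<Rightarrow> ('a \<Rightarrow> real) \<Rightarrow> ('a \<Rightarrow> real) \<Rightarrow> real" where
  "EMb P f h = 2 * (\<integral>z. (f (fst z) - h (fst z)) * (h (fst z) - snd z) \<partial>P)"

end

theory Submission
  imports Defs
begin

text \<open>
  Write the excess risk of f over the risk minimiser f* as
  E M_{f,f*} + \<parallel>f - f*\<parallel>^2. Convexity of F makes E M_{g,f*} \<ge> 0 for all g (first-order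
  condition), and B_{f,f*} = Q_{f,f*} + M_{f,f*} \<ge> M_{f,f*} blockwise. Comparing a median
  with a 0.99-majority of blocks, conditions (1) and (2) then give med B_{f*,g} \<le> \<gamma>2 r^2 for
  every g, so by minimality med B_{f~,f*} \<le> \<gamma>2 r^2. Condition (1) together with \<gamma>1 > \<gamma>2
  forces \<parallel>f~ - f*\<parallel> < r, and condition (2) then yields E M_{f~,f*} \<le> 2 \<gamma>2 r^2.
\<close>

lemma integrable_mult_of_square_integrable:
  fixes a b :: "'b \<Rightarrow> real"
  assumes "a \<in> borel_measurable M" "b \<in> borel_measurable M"
    and "integrable M (\<lambda>x. (a x)^2)" "integrable M (\<lambda>x. (b x)^2)"
  shows "integrable M (\<lambda>x. a x * b x)"
proof (rule Bochner_Integration.integrable_bound[where f="\<lambda>x. (a x)^2 + (b x)^2"])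
  show "integrable M (\<lambda>x. (a x)^2 + (b x)^2)" using assms by simp
  show "(\<lambda>x. a x * b x) \<in> borel_measurable M" using assms by simp
  show "AE x in M. norm (a x * b x) \<le> norm ((a x)^2 + (b x)^2)"
  proof (rule AE_I2)
    fix x
    have "2 * \<bar>a x * b x\<bar> \<le> (a x)^2 + (b x)^2"
      using sum_squares_bound[of "\<bar>a x\<bar>" "\<bar>b x\<bar>"] by (simp add: abs_mult power2_eq_square)
    then show "norm (a x * b x) \<le> norm ((a x)^2 + (b x)^2)" by simp
  qed
qed

lemma integrable_square_diff:
  fixes a b :: "'b \<Rightarrow> real"
  assumes "a \<in> borel_measurable M" "b \<in> borel_measurable M"
    and "integrable M (\<lambda>x. (a x)^2)" "integrable M (\<lambda>x. (b x)^2)"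
  shows "integrable M (\<lambda>x. (a x - b x)^2)"
proof -
  have "integrable M (\<lambda>x. (a x)^2 - 2 * (a x * b x) + (b x)^2)"
    using integrable_mult_of_square_integrable[OF assms] assms by simp
  moreover have "(\<lambda>x. (a x)^2 - 2 * (a x * b x) + (b x)^2) = (\<lambda>x. (a x - b x)^2)"
    by (rule ext) (simp add: power2_diff)
  ultimately show ?thesis by simp
qed

lemma integral_square_add_scaled:
  fixes u w :: "'b \<Rightarrow> real"
  assumes "u \<in> borel_measurable M" "w \<in> borel_measurable M"
    and "integrable M (\<lambda>x. (u x)^2)" "integrable M (\<lambda>x. (w x)^2)"
  shows "(\<integral>x. (w x + t * u x)^2 \<partial>M)
           = (\<integral>x. (w x)^2 \<partial>M) + 2 * t * (\<integral>x. u x * w x \<partial>M) + t^2 * (\<integral>x. (u x)^2 \<partial>M)"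
proof -
  have "(\<lambda>x. (w x + t * u x)^2) = (\<lambda>x. (w x)^2 + (2 * t * (u x * w x) + t^2 * (u x)^2))"
    by (rule ext) (simp add: power2_eq_square algebra_simps)
  then show ?thesis
    using integrable_mult_of_square_integrable[OF assms] assms by simp
qed

lemma nonneg_of_quadratic_nonneg:
  fixes A B :: real
  assumes quad: "\<And>t. 0 < t \<Longrightarrow> t \<le> 1 \<Longrightarrow> 0 \<le> 2 * t * A + t^2 * B" and "0 \<le> B"
  shows "0 \<le> A"
proof (rule ccontr)
  assume "\<not> 0 \<le> A"
  then have A: "A < 0" by simp
  define t where "t = - A / (B - A)"
  have t: "0 < t" "t \<le> 1"
    using A \<open>0 \<le> B\<close> by (auto simp: t_def field_simps)
  have "t * B \<le> - A"
    using A \<open>0 \<le> B\<close> by (simp add: t_def field_simps mult_left_mono)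
  then have "t^2 * B \<le> - t * A"
    using t mult_left_mono[of "t * B" "- A" t] by (simp add: power2_eq_square)
  moreover have "t * A < 0"
    using t A by (simp add: mult_pos_neg)
  ultimately have "2 * t * A + t^2 * B < 0" by linarith
  then show False using quad[OF t] by linarith
qed

lemma integral_mult_nonneg_of_local_min:
  fixes u w :: "'b \<Rightarrow> real"
  assumes "u \<in> borel_measurable M" "w \<in> borel_measurable M"
    and "integrable M (\<lambda>x. (u x)^2)" "integrable M (\<lambda>x. (w x)^2)"
    and min: "\<And>t. 0 < t \<Longrightarrow> t \<le> 1 \<Longrightarrow> (\<integral>x. (w x)^2 \<partial>M) \<le> (\<integral>x. (w x + t * u x)^2 \<partial>M)"
  shows "0 \<le> (\<integral>x. u x * w x \<partial>M)"
proof (rule nonneg_of_quadratic_nonneg)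
  show "0 \<le> (\<integral>x. (u x)^2 \<partial>M)" by simp
  fix t :: real assume "0 < t" "t \<le> 1"
  then show "0 \<le> 2 * t * (\<integral>x. u x * w x \<partial>M) + t^2 * (\<integral>x. (u x)^2 \<partial>M)"
    using min integral_square_add_scaled[OF assms(1-4)] by fastforce
qed

lemma measurable_comp_fst:
  assumes "sets P = sets (SX \<Otimes>\<^sub>M borel)" "f \<in> borel_measurable SX"
  shows "(\<lambda>z. f (fst z)) \<in> borel_measurable P"
  using measurable_compose[OF measurable_fst assms(2)]
  unfolding measurable_cong_sets[OF assms(1) refl] .

lemma risk_decomposition:
  fixes f h :: "'a \<Rightarrow> real"
  assumes "(\<lambda>z. f (fst z)) \<in> borel_measurable P" "(\<lambda>z. h (fst z)) \<in> borel_measurable P"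
    and "snd \<in> borel_measurable P"
    and "integrable P (\<lambda>z. (f (fst z))^2)" "integrable P (\<lambda>z. (h (fst z))^2)"
    and "integrable P (\<lambda>z. (snd z)^2)"
  shows "(\<integral>z. (f (fst z) - snd z)^2 \<partial>P)
           = (\<integral>z. (h (fst z) - snd z)^2 \<partial>P) + EMb P f h + (L2n P (\<lambda>x. f x - h x))^2"
proof -
  have "(\<lambda>z. f (fst z) - snd z) = (\<lambda>z. h (fst z) - snd z + 1 * (f (fst z) - h (fst z)))"
    by auto
  moreover have "integrable P (\<lambda>z. (f (fst z) - h (fst z))^2)"
    using integrable_square_diff[OF assms(1,2,4,5)] .
  moreover have "integrable P (\<lambda>z. (h (fst z) - snd z)^2)"
    using integrable_square_diff[OF assms(2,3,5,6)] .
  ultimately show ?thesis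
    using integral_square_add_scaled[of "\<lambda>z. f (fst z) - h (fst z)" P "\<lambda>z. h (fst z) - snd z" 1]
      assms by (simp add: EMb_def L2n_def)
qed

lemma EMb_nonneg_of_risk_minimizer:
  fixes F :: "('a \<Rightarrow> real) set"
  assumes "\<And>f. f \<in> F \<Longrightarrow> (\<lambda>z. f (fst z)) \<in> borel_measurable P"
    and "snd \<in> borel_measurable P"
    and "\<And>f. f \<in> F \<Longrightarrow> integrable P (\<lambda>z. (f (fst z))^2)"
    and "integrable P (\<lambda>z. (snd z)^2)"
    and convex: "\<And>f g t. f \<in> F \<Longrightarrow> g \<in> F \<Longrightarrow> 0 \<le> t \<Longrightarrow> t \<le> 1
                   \<Longrightarrow> (\<lambda>x. t * f x + (1 - t) * g x) \<in> F"
    and "h \<in> F"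
    and min: "\<And>f. f \<in> F \<Longrightarrow>
          (\<integral>z. (h (fst z) - snd z)^2 \<partial>P) \<le> (\<integral>z. (f (fst z) - snd z)^2 \<partial>P)"
    and "g \<in> F"
  shows "0 \<le> EMb P g h"
proof -
  have "0 \<le> (\<integral>z. (g (fst z) - h (fst z)) * (h (fst z) - snd z) \<partial>P)"
  proof (rule integral_mult_nonneg_of_local_min)
    fix t :: real assume "0 < t" "t \<le> 1"
    then have "(\<lambda>x. t * g x + (1 - t) * h x) \<in> F"
      using convex \<open>g \<in> F\<close> \<open>h \<in> F\<close> by simp
    then have "(\<integral>z. (h (fst z) - snd z)^2 \<partial>P)
        \<le> (\<integral>z. (t * g (fst z) + (1 - t) * h (fst z) - snd z)^2 \<partial>P)"
      using min by fastforce
    also have "(\<lambda>z. t * g (fst z) + (1 - t) * h (fst z) - snd z)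
        = (\<lambda>z. h (fst z) - snd z + t * (g (fst z) - h (fst z)))"
      by (auto simp: algebra_simps)
    finally show "(\<integral>z. (h (fst z) - snd z)^2 \<partial>P)
        \<le> (\<integral>z. (h (fst z) - snd z + t * (g (fst z) - h (fst z)))^2 \<partial>P)" .
  qed (use assms integrable_square_diff[of "\<lambda>z. g (fst z)" P "\<lambda>z. h (fst z)"]
        integrable_square_diff[of "\<lambda>z. h (fst z)" P snd] in auto)
  then show ?thesis by (simp add: EMb_def)
qed

lemma majority_meets_half:
  fixes n :: nat
  assumes "0.99 * real n \<le> real (card {j \<in> {1..n}. A j})" "0 < n"
    and "n \<le> 2 * card {j \<in> {1..n}. B j}"
  shows "\<exists>j \<in> {1..n}. A j \<and> B j"
proof (rule ccontr)
  assume "\<not> ?thesis"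
  then have "card {j \<in> {1..n}. B j} + card {j \<in> {1..n}. A j}
      = card ({j \<in> {1..n}. B j} \<union> {j \<in> {1..n}. A j})"
    by (intro card_Un_disjoint[symmetric]) auto
  also have "\<dots> \<le> card {1..n}"
    by (rule card_mono) auto
  finally show False using assms by simp
qed

lemma Bb_swap: "Bb N n xs ys f h j = - Bb N n xs ys h f j"
  by (simp add: Bb_def)

lemma Bb_eq_Qb_plus_Mb: "Bb N n xs ys f h j = Qb N n xs ys f h j + Mb N n xs ys f h j"
proof -
  let ?d = "\<lambda>i. f (xs i) - h (xs i)"
  have "Bb N n xs ys f h j
      = (1 / real (N div n)) * (\<Sum>i\<in>block N n j. (f (xs i) - ys i)^2 - (h (xs i) - ys i)^2)"
    by (simp add: Bb_def sum_subtractf right_diff_distrib)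
  also have "\<dots> = (1 / real (N div n))
      * (\<Sum>i\<in>block N n j. (?d i)^2 + 2 * (?d i * (h (xs i) - ys i)))"
    by (intro arg_cong[where f="\<lambda>s. _ * s"] sum.cong) (simp_all add: power2_eq_square algebra_simps)
  also have "\<dots> = Qb N n xs ys f h j + Mb N n xs ys f h j"
    by (simp only: Qb_def Mb_def sum.distrib sum_distrib_left[symmetric]) (simp add: distrib_left)
  finally show ?thesis .
qed

lemma Mb_le_Bb: "Mb N n xs ys f h j \<le> Bb N n xs ys f h j"
  by (simp add: Bb_eq_Qb_plus_Mb Qb_def sum_nonneg)

text \<open>
  In the three lemmas below d and e stand for \<parallel>f - h\<parallel> and E M_{f,h}; the hypotheses are
  conditions (1) and (2) for the pair f, h.
\<close>

lemma median_Bb_le_of_EMb_nonneg: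
  assumes med: "is_median n (Bb N n xs ys h f) t" and "0 < n"
    and "0 < r" "0 < \<gamma>1" "0 < \<gamma>2" and "0 \<le> e"
    and cond1: "r \<le> d \<Longrightarrow>
          0.99 * real n \<le> real (card {j \<in> {1..n}. \<gamma>1 * d^2 \<le> Bb N n xs ys f h j})"
    and cond2: "d < r \<Longrightarrow>
          0.99 * real n \<le> real (card {j \<in> {1..n}. \<bar>Mb N n xs ys f h j - e\<bar> \<le> \<gamma>2 * r^2})"
  shows "t \<le> \<gamma>2 * r^2"
proof (rule ccontr)
  assume big: "\<not> t \<le> \<gamma>2 * r^2"
  have half: "n \<le> 2 * card {j \<in> {1..n}. - Bb N n xs ys f h j \<ge> t}"
    using med by (simp add: is_median_def Bb_swap[of N n xs ys h f])
  have "0 < \<gamma>2 * r^2" using \<open>0 < r\<close> \<open>0 < \<gamma>2\<close> by simp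
  show False
  proof (cases "r \<le> d")
    case True
    then obtain j where "\<gamma>1 * d^2 \<le> Bb N n xs ys f h j" "- Bb N n xs ys f h j \<ge> t"
      using majority_meets_half[OF cond1 \<open>0 < n\<close> half] by blast
    moreover have "0 \<le> \<gamma>1 * d^2" using \<open>0 < \<gamma>1\<close> by simp
    ultimately show False using big \<open>0 < \<gamma>2 * r^2\<close> by linarith
  next
    case False
    then obtain j where "\<bar>Mb N n xs ys f h j - e\<bar> \<le> \<gamma>2 * r^2" "- Bb N n xs ys f h j \<ge> t"
      using majority_meets_half[OF cond2 \<open>0 < n\<close> half] by auto
    then show False using big \<open>0 \<le> e\<close> Mb_le_Bb[of N n xs ys f h j] by linarith
  qed
qed

lemma dist_lt_of_median_Bb_le:
  assumes med: "is_median n (Bb N n xs ys f h) t" and "0 < n"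
    and "t \<le> \<gamma>2 * r^2" and "0 < r" "0 < \<gamma>1" "\<gamma>2 < \<gamma>1"
    and cond1: "r \<le> d \<Longrightarrow>
          0.99 * real n \<le> real (card {j \<in> {1..n}. \<gamma>1 * d^2 \<le> Bb N n xs ys f h j})"
  shows "d < r"
proof (rule ccontr)
  assume "\<not> d < r"
  then have "r \<le> d" by simp
  have half: "n \<le> 2 * card {j \<in> {1..n}. Bb N n xs ys f h j \<le> t}"
    using med by (simp add: is_median_def)
  obtain j where "\<gamma>1 * d^2 \<le> Bb N n xs ys f h j" "Bb N n xs ys f h j \<le> t"
    using majority_meets_half[OF cond1[OF \<open>r \<le> d\<close>] \<open>0 < n\<close> half] by blast
  moreover have "\<gamma>2 * r^2 < \<gamma>1 * r^2" using \<open>0 < r\<close> \<open>\<gamma>2 < \<gamma>1\<close> by simp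
  moreover have "\<gamma>1 * r^2 \<le> \<gamma>1 * d^2"
    using \<open>0 < r\<close> \<open>r \<le> d\<close> \<open>0 < \<gamma>1\<close> by (simp add: power_mono)
  ultimately show False using \<open>t \<le> \<gamma>2 * r^2\<close> by linarith
qed

lemma EMb_le_of_median_Bb_le:
  assumes med: "is_median n (Bb N n xs ys f h) t" and "0 < n"
    and "t \<le> \<gamma>2 * r^2"
    and cond2: "0.99 * real n \<le> real (card {j \<in> {1..n}. \<bar>Mb N n xs ys f h j - e\<bar> \<le> \<gamma>2 * r^2})"
  shows "e \<le> 2 * \<gamma>2 * r^2"
proof -
  have half: "n \<le> 2 * card {j \<in> {1..n}. Bb N n xs ys f h j \<le> t}"
    using med by (simp add: is_median_def)
  obtain j where "\<bar>Mb N n xs ys f h j - e\<bar> \<le> \<gamma>2 * r^2" "Bb N n xs ys f h j \<le> t"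
    using majority_meets_half[OF cond2 \<open>0 < n\<close> half] by auto
  then show ?thesis using \<open>t \<le> \<gamma>2 * r^2\<close> Mb_le_Bb[of N n xs ys f h j] by linarith
qed

theorem theorem1:
  fixes SX :: "'a measure" and P :: "('a \<times> real) measure"
    and F :: "('a \<Rightarrow> real) set" and fstar ftil :: "'a \<Rightarrow> real"
    and N n :: nat and xs :: "nat \<Rightarrow> 'a" and ys :: "nat \<Rightarrow> real"
    and med :: "('a \<Rightarrow> real) \<Rightarrow> ('a \<Rightarrow> real) \<Rightarrow> real"
    and r \<gamma>1 \<gamma>2 :: real
  assumes P_prob: "prob_space P"
    and P_sets: "sets P = sets (SX \<Otimes>\<^sub>M borel)"
    and F_meas: "\<And>f. f \<in> F \<Longrightarrow> f \<in> borel_measurable SX"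
    and F_convex: "\<And>f g t. f \<in> F \<Longrightarrow> g \<in> F \<Longrightarrow> 0 \<le> t \<Longrightarrow> t \<le> 1
                     \<Longrightarrow> (\<lambda>x. t * f x + (1 - t) * g x) \<in> F"
    and F_L2: "\<And>f. f \<in> F \<Longrightarrow> integrable P (\<lambda>z. (f (fst z))^2)"
    and Y_L2: "integrable P (\<lambda>z. (snd z)^2)"
    and fstar_in: "fstar \<in> F"
    and fstar_min: "\<And>f. f \<in> F \<Longrightarrow>
          (\<integral>z. (fstar (fst z) - snd z)^2 \<partial>P) \<le> (\<integral>z. (f (fst z) - snd z)^2 \<partial>P)"
    and sample: "\<And>i. i \<in> {1..N} \<Longrightarrow> xs i \<in> space SX"
    and n_pos: "0 < n" and N_pos: "0 < N" and n_dvd: "n dvd N"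
    and med_is: "\<And>f g. f \<in> F \<Longrightarrow> g \<in> F \<Longrightarrow> is_median n (Bb N n xs ys f g) (med f g)"
    and ftil_in: "ftil \<in> F"
    and ftil_min: "\<And>h. h \<in> F \<Longrightarrow>
          (SUP g\<in>F. ereal (med ftil g)) \<le> (SUP g\<in>F. ereal (med h g))"
    and r_pos: "0 < r" and g1_pos: "0 < \<gamma>1" and g2_pos: "0 < \<gamma>2"
    and cond1: "\<And>f. f \<in> F \<Longrightarrow> L2n P (\<lambda>x. f x - fstar x) \<ge> r \<Longrightarrow>
          real (card {j \<in> {1..n}. Bb N n xs ys f fstar j \<ge> \<gamma>1 * (L2n P (\<lambda>x. f x - fstar x))^2})
            \<ge> 0.99 * real n"
    and cond2: "\<And>f. f \<in> F \<Longrightarrow> L2n P (\<lambda>x. f x - fstar x) < r \<Longrightarrow>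
          real (card {j \<in> {1..n}. \<bar>Mb N n xs ys f fstar j - EMb P f fstar\<bar> \<le> \<gamma>2 * r^2})
            \<ge> 0.99 * real n"
    and gam: "\<gamma>1 > \<gamma>2"
  shows "(\<integral>z. (ftil (fst z) - snd z)^2 \<partial>P)
           \<le> (\<integral>z. (fstar (fst z) - snd z)^2 \<partial>P) + (1 + 2 * \<gamma>2) * r^2"
proof -
  have meas: "(\<lambda>z. f (fst z)) \<in> borel_measurable P" if "f \<in> F" for f
    using measurable_comp_fst[OF P_sets F_meas[OF that]] .
  have "snd \<in> borel_measurable (SX \<Otimes>\<^sub>M borel)" by simp
  then have meas_Y: "snd \<in> borel_measurable P"
    unfolding measurable_cong_sets[OF P_sets refl] .
  have first_order: "0 \<le> EMb P g fstar" if "g \<in> F" for g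
    using EMb_nonneg_of_risk_minimizer[OF meas meas_Y F_L2 Y_L2 F_convex fstar_in fstar_min that]
    by blast
  have "med fstar g \<le> \<gamma>2 * r^2" if "g \<in> F" for g
    using median_Bb_le_of_EMb_nonneg[OF med_is[OF fstar_in that] n_pos r_pos g1_pos g2_pos
        first_order[OF that] cond1[OF that] cond2[OF that]] .
  then have "(SUP g\<in>F. ereal (med fstar g)) \<le> ereal (\<gamma>2 * r^2)"
    by (simp add: SUP_least)
  then have "ereal (med ftil fstar) \<le> ereal (\<gamma>2 * r^2)"
    using ftil_min[OF fstar_in] SUP_upper[OF fstar_in, of "\<lambda>g. ereal (med ftil g)"]
    by (meson order_trans)
  then have med_ftil: "med ftil fstar \<le> \<gamma>2 * r^2" by simp
  have dist: "L2n P (\<lambda>x. ftil x - fstar x) < r"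
    using dist_lt_of_median_Bb_le[OF med_is[OF ftil_in fstar_in] n_pos med_ftil r_pos g1_pos gam
        cond1[OF ftil_in]] .
  have "EMb P ftil fstar \<le> 2 * \<gamma>2 * r^2"
    using EMb_le_of_median_Bb_le[OF med_is[OF ftil_in fstar_in] n_pos med_ftil
        cond2[OF ftil_in dist]] .
  moreover have "(L2n P (\<lambda>x. ftil x - fstar x))^2 < r^2"
    using dist by (intro power_strict_mono) (simp_all add: L2n_def)
  ultimately show ?thesis
    using risk_decomposition[OF meas[OF ftil_in] meas[OF fstar_in] meas_Y
        F_L2[OF ftil_in] F_L2[OF fstar_in] Y_L2] by (simp add: algebra_simps)
qed

end
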